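(* For any positive integer $n$: (1) the set $\mathcal{A}^0_n$ of well-labelled Motzkin paths $(\mathbf{p},\sigma)$ of size $n$ with $p_1=0$ is in bijection with $[n]\times\mathcal{A}_{n-1}$; (2) the set $\mathcal{A}^1_n$ of well-labelled Motzkin paths of size $n$ with $p_1=1$ is in bijection with the set $\mathcal{C}_n$ of all unordered pairs $\{(I',P'),(I'',P'')\}$ such that $I'\subseteq[n]$, $I''=[n]\setminus I'$, and $P'$, $P''$ are well-labelled Motzkin paths of respective sizes $|I'|$ and $|I''|$.
   Context: A well-labelled path of size $n$ is a pair $(\mathbf{p},\sigma)$ where $\mathbf{p}=p_1\ldots p_{n-1}$ is a word on $\{-1,0,+1\}$ and $\sigma$ is a permutation of $[n]$ such that $p_i=-1$ implies $\sigma_i<\sigma_{i+1}$ and $p_i=1$ implies $\sigma_i>\sigma_{i+1}$. It is Motzkin if $\sum_{i=1}^j p_i\ge0$ for all $j=1,\ldots,n-2$ and $\sum_{i=1}^{n-1}p_i=-1$ (so every Motzkin path has size at least $2$). $\mathcal{A}_m$ denotes the set of well-labelled Motzkin paths of size $m$ (empty for $m\le 1$). *)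

theory Defs
  imports Main
begin

text \<open>A path of size n: a step word p = p_1 ... p_(n-1) over {-1,0,1} (list of length n-1,
  0-indexed in Isabelle), and a permutation sigma of [n] = {1..n} given as the list
  sigma_1 ... sigma_n.\<close>

definition well_labelled_path :: "nat \<Rightarrow> int list \<Rightarrow> nat list \<Rightarrow> bool" where
  "well_labelled_path n p \<sigma> \<longleftrightarrow>
     length p = n - 1 \<and> set p \<subseteq> {-1, 0, 1} \<and>
     length \<sigma> = n \<and> distinct \<sigma> \<and> set \<sigma> = {1..n} \<and>
     (\<forall>i < n - 1. (p ! i = -1 \<longrightarrow> \<sigma> ! i < \<sigma> ! (i+1)) \<and>
                    (p ! i = 1 \<longrightarrow> \<sigma> ! i > \<sigma> ! (i+1)))"

definition motzkin :: "nat \<Rightarrow> int list \<Rightarrow> bool" where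
  "motzkin n p \<longleftrightarrow>
     (\<forall>j \<in> {1..n-2}. sum_list (take j p) \<ge> 0) \<and> sum_list (take (n-1) p) = -1"

definition wl_motzkin :: "nat \<Rightarrow> (int list \<times> nat list) set" where
  "wl_motzkin m = {(p, \<sigma>). well_labelled_path m p \<sigma> \<and> motzkin m p}"

definition wl_motzkin_first :: "int \<Rightarrow> nat \<Rightarrow> (int list \<times> nat list) set" where
  "wl_motzkin_first c n = {(p, \<sigma>) \<in> wl_motzkin n. p ! 0 = c}"

definition pair_set :: "nat \<Rightarrow> (nat set \<times> (int list \<times> nat list)) set set" where
  "pair_set n = {{(I, P1), ({1..n} - I, P2)} | I P1 P2.
      I \<subseteq> {1..n} \<and> P1 \<in> wl_motzkin (card I) \<and> P2 \<in> wl_motzkin (card ({1..n} - I))}"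

end

theory Submission
  imports Defs
begin

(*
  It is convenient to let the labels of a path range over an arbitrary finite set S of naturals:
  the order-preserving bijection rank S onto {1..card S} transports well-labelled Motzkin paths
  on S to standard ones without touching the steps.

  If p_1 = 0, the first step constrains nothing, so deleting it leaves a well-labelled Motzkin
  path on S - {sigma_1}; record sigma_1 and standardise the rest.

  If p_1 = 1, cut the path at its first return to height 0, which is a down step:
  p = p' (-1) p''. The prefix p' read backwards with negated steps is a Motzkin word a (so the
  prefix together with the down step is an "arch" reverse_walk a @ [-1]), and p'' is a Motzkin
  word; the two pieces carry complementary label sets. The down step forces the label before it
  to be smaller than the label after it, i.e. the first label of the reversed prefix is smaller
  than the first label of the suffix. Every unordered pair of pieces can be put in this order in
  exactly one way, so the cut is a bijection onto unordered pairs.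
*)

lemma strict_mono_on_the_inv_into:
  fixes h :: "'a::linorder \<Rightarrow> 'b::linorder"
  assumes "bij_betw h A B" "strict_mono_on A h"
  shows "strict_mono_on B (the_inv_into A h)"
proof (rule strict_mono_onI)
  fix x y assume xy: "x \<in> B" "y \<in> B" "x < y"
  have inv: "the_inv_into A h x \<in> A" "the_inv_into A h y \<in> A"
    "h (the_inv_into A h x) = x" "h (the_inv_into A h y) = y"
    using xy assms(1) by (auto simp: bij_betw_def the_inv_into_into f_the_inv_into_f)
  show "the_inv_into A h x < the_inv_into A h y"
  proof (rule ccontr)
    assume "\<not> ?thesis"
    then have "h (the_inv_into A h y) \<le> h (the_inv_into A h x)"
      using inv assms(2) by (metis linorder_not_less order_le_less strict_mono_onD)
    with inv xy show False
      by simp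
  qed
qed

lemma bij_betw_Sigma_fibrewise:
  "(\<And>x. x \<in> A \<Longrightarrow> bij_betw (f x) (B x) (C x)) \<Longrightarrow>
    bij_betw (\<lambda>(x, y). (x, f x y)) (Sigma A B) (Sigma A C)"
  by (auto simp: bij_betw_def inj_on_def image_iff) blast+

lemma bij_betw_unordered_pairs:
  fixes key :: "'a \<Rightarrow> 'b::linorder"
  assumes swap: "\<And>x y. (x, y) \<in> R \<Longrightarrow> (y, x) \<in> R"
    and distinct_keys: "\<And>x y. (x, y) \<in> R \<Longrightarrow> key x \<noteq> key y"
  shows "bij_betw (\<lambda>(x, y). {x, y}) {(x, y) \<in> R. key x < key y} {{x, y} | x y. (x, y) \<in> R}"
  unfolding bij_betw_def
proof
  show "inj_on (\<lambda>(x, y). {x, y}) {(x, y) \<in> R. key x < key y}"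
    by (rule inj_onI) (auto simp: doubleton_eq_iff)
  show "(\<lambda>(x, y). {x, y}) ` {(x, y) \<in> R. key x < key y} = {{x, y} | x y. (x, y) \<in> R}"
  proof (intro equalityI subsetI)
    fix X assume "X \<in> {{x, y} | x y. (x, y) \<in> R}"
    then obtain x y where "X = {x, y}" "(x, y) \<in> R"
      by blast
    show "X \<in> (\<lambda>(x, y). {x, y}) ` {(x, y) \<in> R. key x < key y}"
    proof (cases "key x < key y")
      case True
      with \<open>(x, y) \<in> R\<close> show ?thesis
        unfolding \<open>X = {x, y}\<close> by force
    next
      case False
      with distinct_keys[OF \<open>(x, y) \<in> R\<close>] have "key y < key x"
        by simp
      with swap[OF \<open>(x, y) \<in> R\<close>] have "{y, x} \<in> (\<lambda>(x, y). {x, y}) ` {(x, y) \<in> R. key x < key y}"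
        by force
      then show ?thesis
        unfolding \<open>X = {x, y}\<close> by (simp add: insert_commute)
    qed
  qed auto
qed

definition rank :: "nat set \<Rightarrow> nat \<Rightarrow> nat" where
  "rank S x = card {y \<in> S. y < x} + 1"

lemma strict_mono_on_rank: "finite S \<Longrightarrow> strict_mono_on S (rank S)"
proof (rule strict_mono_onI)
  fix x y assume "finite S" "x \<in> S" "y \<in> S" "x < y"
  then have "{z \<in> S. z < x} \<subset> {z \<in> S. z < y}" and "finite {z \<in> S. z < y}"
    by auto
  then show "rank S x < rank S y"
    unfolding rank_def by (simp add: psubset_card_mono)
qed

lemma bij_betw_rank: "finite S \<Longrightarrow> bij_betw (rank S) S {1..card S}"
proof -
  assume S: "finite S"
  have inj: "inj_on (rank S) S"
    by (rule strict_mono_on_imp_inj_on[OF strict_mono_on_rank[OF S]])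
  have "rank S x \<le> card S" if "x \<in> S" for x
  proof -
    have "{y \<in> S. y < x} \<subset> S"
      using that by auto
    then show ?thesis
      unfolding rank_def using S by (simp add: Suc_le_eq psubset_card_mono)
  qed
  then have "rank S ` S \<subseteq> {1..card S}"
    by (auto simp: rank_def)
  moreover have "card (rank S ` S) = card {1..card S}"
    by (simp add: card_image[OF inj])
  ultimately show ?thesis
    unfolding bij_betw_def using inj by (simp add: card_subset_eq)
qed

definition reverse_walk :: "int list \<Rightarrow> int list" where
  "reverse_walk p = map uminus (rev p)"

lemma reverse_walk_reverse_walk [simp]: "reverse_walk (reverse_walk p) = p"
  by (simp add: reverse_walk_def rev_map)

lemma length_reverse_walk [simp]: "length (reverse_walk p) = length p"
  by (simp add: reverse_walk_def)

lemma set_reverse_walk: "set (reverse_walk p) = uminus ` set p"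
  by (simp add: reverse_walk_def)

lemma sum_list_reverse_walk: "sum_list (reverse_walk p) = - sum_list p"
  by (induction p) (simp_all add: reverse_walk_def)

lemma sum_take_reverse_walk:
  assumes "j \<le> length p"
  shows "sum_list (take j (reverse_walk p)) = sum_list (take (length p - j) p) - sum_list p"
proof -
  have "take j (reverse_walk p) = reverse_walk (drop (length p - j) p)"
    using assms by (simp add: reverse_walk_def take_map take_rev)
  then show ?thesis
    using sum_list_append[of "take (length p - j) p" "drop (length p - j) p"]
    by (simp add: sum_list_reverse_walk)
qed

fun well_labelled :: "int list \<Rightarrow> nat list \<Rightarrow> bool" where
  "well_labelled (c # p) (x # y # \<sigma>) \<longleftrightarrow>
     (c = -1 \<longrightarrow> x < y) \<and> (c = 1 \<longrightarrow> y < x) \<and> well_labelled p (y # \<sigma>)"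
| "well_labelled _ _ = True"

lemma well_labelled_iff_nth:
  "length \<sigma> = Suc (length p) \<Longrightarrow> well_labelled p \<sigma> \<longleftrightarrow>
    (\<forall>i < length p. (p ! i = -1 \<longrightarrow> \<sigma> ! i < \<sigma> ! (i+1)) \<and> (p ! i = 1 \<longrightarrow> \<sigma> ! i > \<sigma> ! (i+1)))"
proof (induction p arbitrary: \<sigma>)
  case (Cons c p)
  then obtain x y \<tau> where "\<sigma> = x # y # \<tau>"
    by (metis Suc_length_conv)
  with Cons show ?case
    by (simp add: All_less_Suc2)
qed simp

lemma well_labelled_Cons_zero [simp]: "well_labelled (0 # p) (x # \<sigma>) \<longleftrightarrow> well_labelled p \<sigma>"
  by (cases \<sigma>) auto

lemma well_labelled_map:
  "strict_mono_on (set \<sigma>) h \<Longrightarrow> well_labelled p \<sigma> \<Longrightarrow> well_labelled p (map h \<sigma>)"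
  by (induction p \<sigma> rule: well_labelled.induct) (auto simp: strict_mono_on_def)

lemma well_labelled_append:
  "length \<sigma> = Suc (length p) \<Longrightarrow> well_labelled (p @ c # q) (\<sigma> @ y # \<tau>) \<longleftrightarrow>
     well_labelled p \<sigma> \<and> (c = -1 \<longrightarrow> last \<sigma> < y) \<and> (c = 1 \<longrightarrow> y < last \<sigma>) \<and> well_labelled q (y # \<tau>)"
proof (induction p arbitrary: \<sigma>)
  case Nil
  then obtain x where "\<sigma> = [x]"
    by (metis length_0_conv length_Suc_conv)
  then show ?case by simp
next
  case (Cons d p)
  then obtain x z \<rho> where \<sigma>: "\<sigma> = x # z # \<rho>"
    by (metis Suc_length_conv)
  with Cons.prems have "length (z # \<rho>) = Suc (length p)"
    by simp
  from Cons.IH[OF this] show ?case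
    unfolding \<sigma> by auto
qed

lemma well_labelled_reverse_walkI:
  "length \<sigma> = Suc (length p) \<Longrightarrow> well_labelled p \<sigma> \<Longrightarrow> well_labelled (reverse_walk p) (rev \<sigma>)"
proof (induction p arbitrary: \<sigma>)
  case (Cons c p)
  then obtain x y \<tau> where \<sigma>: "\<sigma> = x # y # \<tau>"
    by (metis Suc_length_conv)
  have "well_labelled (reverse_walk p) (rev (y # \<tau>))"
    by (rule Cons.IH) (use Cons.prems \<sigma> in auto)
  moreover have "reverse_walk (c # p) = reverse_walk p @ [- c]" "rev \<sigma> = rev (y # \<tau>) @ [x]"
    by (simp_all add: reverse_walk_def \<sigma>)
  moreover have "length (rev (y # \<tau>)) = Suc (length (reverse_walk p))"
    using Cons.prems \<sigma> by simp
  ultimately show ?case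
    using Cons.prems \<sigma> well_labelled_append[of "rev (y # \<tau>)" "reverse_walk p" "- c" "[]" x "[]"]
    by auto
qed (simp add: reverse_walk_def)

lemma well_labelled_reverse_walk_iff:
  "length \<sigma> = Suc (length p) \<Longrightarrow> well_labelled (reverse_walk p) (rev \<sigma>) \<longleftrightarrow> well_labelled p \<sigma>"
  using well_labelled_reverse_walkI[of \<sigma> p] well_labelled_reverse_walkI[of "rev \<sigma>" "reverse_walk p"]
  by auto

section \<open>Motzkin words\<close>

definition motzkin_word :: "int list \<Rightarrow> bool" where
  "motzkin_word p \<longleftrightarrow> (\<forall>j < length p. 0 \<le> sum_list (take j p)) \<and> sum_list p = -1"

lemma motzkin_iff_motzkin_word: "length p = n - 1 \<Longrightarrow> motzkin n p \<longleftrightarrow> motzkin_word p"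
proof (cases "n \<le> 1")
  case False
  assume p: "length p = n - 1"
  have "(\<forall>j \<in> {1..n-2}. 0 \<le> sum_list (take j p)) \<longleftrightarrow> (\<forall>j < length p. 0 \<le> sum_list (take j p))"
  proof (intro iffI allI impI)
    fix j assume "\<forall>j \<in> {1..n-2}. 0 \<le> sum_list (take j p)" "j < length p"
    with p show "0 \<le> sum_list (take j p)"
      by (cases "j = 0") auto
  qed (use p in auto)
  with p show ?thesis
    by (simp add: motzkin_def motzkin_word_def)
qed (simp add: motzkin_def motzkin_word_def)

lemma motzkin_word_not_Nil: "motzkin_word p \<Longrightarrow> p \<noteq> []"
  by (auto simp: motzkin_word_def)

lemma motzkin_word_Cons_zero [simp]: "motzkin_word (0 # p) \<longleftrightarrow> motzkin_word p"
  by (simp add: motzkin_word_def All_less_Suc2)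

lemma motzkin_word_reverse_walk_iff:
  "motzkin_word (reverse_walk r) \<longleftrightarrow> (\<forall>j \<in> {1..length r}. 1 \<le> sum_list (take j r)) \<and> sum_list r = 1"
proof -
  have "(\<forall>j < length r. 0 \<le> sum_list (take j (reverse_walk r))) \<longleftrightarrow>
      (\<forall>j \<in> {1..length r}. sum_list r \<le> sum_list (take j r))"
  proof (intro iffI ballI allI impI)
    fix j assume "\<forall>j < length r. 0 \<le> sum_list (take j (reverse_walk r))" "j \<in> {1..length r}"
    then have "0 \<le> sum_list (take (length r - j) (reverse_walk r))"
      by auto
    with \<open>j \<in> {1..length r}\<close> show "sum_list r \<le> sum_list (take j r)"
      using sum_take_reverse_walk[of "length r - j" r] by auto
  next
    fix j assume "\<forall>j \<in> {1..length r}. sum_list r \<le> sum_list (take j r)" "j < length r"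
    then show "0 \<le> sum_list (take j (reverse_walk r))"
      using sum_take_reverse_walk[of j r] by auto
  qed
  then show ?thesis
    by (auto simp: motzkin_word_def sum_list_reverse_walk)
qed

lemma sum_take_reverse_walk_pos:
  "motzkin_word a \<Longrightarrow> 0 < j \<Longrightarrow> j \<le> length a \<Longrightarrow> 1 \<le> sum_list (take j (reverse_walk a))"
  using motzkin_word_reverse_walk_iff[of "reverse_walk a"] by simp

lemma sum_take_arch:
  "sum_list r = 1 \<Longrightarrow> sum_list (take (Suc (length r) + i) (r @ (-1) # b)) = sum_list (take i (b :: int list))"
  by (simp add: algebra_simps)

lemma motzkin_word_arch_iff:
  assumes "motzkin_word a"
  shows "motzkin_word (reverse_walk a @ (-1) # b) \<longleftrightarrow> motzkin_word b"
proof -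
  let ?r = "reverse_walk a"
  have r: "sum_list ?r = 1"
    using assms by (simp add: motzkin_word_def sum_list_reverse_walk)
  have low: "0 \<le> sum_list (take j (?r @ (-1) # b))" if "j \<le> length ?r" for j
    using sum_take_reverse_walk_pos[OF assms, of j] that by (cases "j = 0") auto
  have "(\<forall>j < length (?r @ (-1) # b). 0 \<le> sum_list (take j (?r @ (-1) # b))) \<longleftrightarrow>
      (\<forall>i < length b. 0 \<le> sum_list (take i b))"
  proof (intro iffI allI impI)
    fix i assume prefixes: "\<forall>j < length (?r @ (-1) # b). 0 \<le> sum_list (take j (?r @ (-1) # b))"
      and "i < length b"
    moreover have "Suc (length ?r) + i < length (?r @ (-1) # b)"
      using \<open>i < length b\<close> by simp
    ultimately have "0 \<le> sum_list (take (Suc (length ?r) + i) (?r @ (-1) # b))"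
      by blast
    then show "0 \<le> sum_list (take i b)"
      by (simp only: sum_take_arch[OF r])
  next
    fix j assume b: "\<forall>i < length b. 0 \<le> sum_list (take i b)" and j: "j < length (?r @ (-1) # b)"
    show "0 \<le> sum_list (take j (?r @ (-1) # b))"
    proof (cases "j \<le> length ?r")
      case False
      define i where "i = j - Suc (length ?r)"
      with False j have "j = Suc (length ?r) + i" "i < length b"
        by simp_all
      with b show ?thesis
        by (simp only: sum_take_arch[OF r])
    qed (rule low)
  qed
  with r show ?thesis
    by (simp add: motzkin_word_def)
qed

text \<open>Steps are at least \<open>-1\<close>, so the first nonpositive prefix sum is the first return to 0.\<close>

definition first_return :: "int list \<Rightarrow> nat" where
  "first_return p = (LEAST j. 0 < j \<and> sum_list (take j p) \<le> 0)"

lemma first_return_arch: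
  assumes "motzkin_word a"
  shows "first_return (reverse_walk a @ (-1) # b) = Suc (length a)"
  unfolding first_return_def
proof (rule Least_equality)
  have "sum_list (reverse_walk a) = 1"
    using assms by (simp add: motzkin_word_def sum_list_reverse_walk)
  then show "0 < Suc (length a) \<and> sum_list (take (Suc (length a)) (reverse_walk a @ (-1) # b)) \<le> 0"
    by simp
  show "Suc (length a) \<le> j" if "0 < j \<and> sum_list (take j (reverse_walk a @ (-1) # b)) \<le> 0" for j
    using that sum_take_reverse_walk_pos[OF assms, of j] by (cases "j \<le> length a") auto
qed

lemma nth_zero_reverse_walk:
  assumes "motzkin_word a" "set a \<subseteq> {-1, 0, 1}"
  shows "(reverse_walk a @ q) ! 0 = 1"
proof -
  have "a \<noteq> []"
    using assms(1) by (rule motzkin_word_not_Nil)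
  then have "take 1 (reverse_walk a) = [reverse_walk a ! 0]" "reverse_walk a ! 0 \<in> set (reverse_walk a)"
    by (simp_all add: take_Suc_conv_app_nth)
  moreover have "1 \<le> sum_list (take 1 (reverse_walk a))"
    using sum_take_reverse_walk_pos[OF assms(1), of 1] \<open>a \<noteq> []\<close> by (simp add: Suc_le_eq)
  ultimately show ?thesis
    using assms(2) \<open>a \<noteq> []\<close> by (auto simp: set_reverse_walk nth_append)
qed

lemma motzkin_word_arch_decomposition:
  assumes p: "motzkin_word p" "set p \<subseteq> {-1, 0, 1}" "p ! 0 = 1"
  shows "\<exists>a b. p = reverse_walk a @ (-1) # b \<and> motzkin_word a"
proof -
  define k where "k = first_return p"
  have "p \<noteq> []"
    using p(1) by (rule motzkin_word_not_Nil)
  then have witness: "0 < length p \<and> sum_list (take (length p) p) \<le> 0"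
    using p(1) by (simp add: motzkin_word_def)
  have k: "0 < k" "sum_list (take k p) \<le> 0" "k \<le> length p"
    using LeastI[of "\<lambda>j. 0 < j \<and> sum_list (take j p) \<le> 0", OF witness]
      Least_le[of "\<lambda>j. 0 < j \<and> sum_list (take j p) \<le> 0", OF witness]
    by (simp_all add: k_def first_return_def)
  have before: "1 \<le> sum_list (take j p)" if "0 < j" "j < k" for j
    using not_less_Least[of j "\<lambda>j. 0 < j \<and> sum_list (take j p) \<le> 0"] that
    by (simp add: k_def first_return_def)
  have "sum_list (take 1 p) = 1"
    using \<open>p \<noteq> []\<close> p(3) by (simp add: take_Suc_conv_app_nth)
  with k have "1 < k"
    by (cases "k = 1") auto
  define r where "r = take (k - 1) p"
  have "k - 1 < length p"
    using k by simp
  then have step: "take k p = r @ [p ! (k - 1)]" "p ! (k - 1) \<in> {-1, 0, 1}"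
    using k(1) p(2) nth_mem by (auto simp: r_def take_Suc_conv_app_nth[symmetric] simp del: One_nat_def)
  have "1 \<le> sum_list r"
    using before[of "k - 1"] \<open>1 < k\<close> by (simp add: r_def)
  with k(2) step have r_sum: "sum_list r = 1" and down: "p ! (k - 1) = -1"
    by auto
  have "\<forall>j \<in> {1..length r}. 1 \<le> sum_list (take j r)"
    using before k by (auto simp: r_def)
  with r_sum have "motzkin_word (reverse_walk r)"
    by (simp add: motzkin_word_reverse_walk_iff)
  moreover have "p = reverse_walk (reverse_walk r) @ (-1) # drop k p"
    using id_take_nth_drop[of "k - 1" p] k \<open>1 < k\<close> down by (simp add: r_def Suc_diff_1)
  ultimately show ?thesis
    by blast
qed

section \<open>Motzkin paths labelled by a finite set\<close>

definition labelled_motzkin :: "nat set \<Rightarrow> (int list \<times> nat list) set" where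
  "labelled_motzkin S = {(p, \<sigma>). set p \<subseteq> {-1, 0, 1} \<and> motzkin_word p \<and>
     length \<sigma> = Suc (length p) \<and> distinct \<sigma> \<and> set \<sigma> = S \<and> well_labelled p \<sigma>}"

lemma wl_motzkin_eq_labelled_motzkin: "wl_motzkin n = labelled_motzkin {1..n}"
proof (intro set_eqI)
  fix P :: "int list \<times> nat list"
  obtain p \<sigma> where P: "P = (p, \<sigma>)"
    by fastforce
  have "(p, \<sigma>) \<in> wl_motzkin n \<longleftrightarrow> (p, \<sigma>) \<in> labelled_motzkin {1..n}"
  proof
    assume "(p, \<sigma>) \<in> wl_motzkin n"
    then have wl: "well_labelled_path n p \<sigma>" and "motzkin n p"
      by (simp_all add: wl_motzkin_def)
    then have "motzkin_word p"
      by (simp add: well_labelled_path_def motzkin_iff_motzkin_word)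
    with wl have "length \<sigma> = Suc (length p)"
      using motzkin_word_not_Nil by (fastforce simp: well_labelled_path_def)
    with wl \<open>motzkin_word p\<close> show "(p, \<sigma>) \<in> labelled_motzkin {1..n}"
      by (simp add: labelled_motzkin_def well_labelled_path_def well_labelled_iff_nth)
  next
    assume "(p, \<sigma>) \<in> labelled_motzkin {1..n}"
    then have lm: "set p \<subseteq> {-1, 0, 1}" "motzkin_word p" "length \<sigma> = Suc (length p)" "distinct \<sigma>"
      "set \<sigma> = {1..n}" "well_labelled p \<sigma>"
      by (simp_all add: labelled_motzkin_def)
    then have "length \<sigma> = n"
      by (metis card_atLeastAtMost diff_Suc_1 distinct_card)
    with lm show "(p, \<sigma>) \<in> wl_motzkin n"
      by (simp add: wl_motzkin_def well_labelled_path_def motzkin_iff_motzkin_word well_labelled_iff_nth)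
  qed
  then show "P \<in> wl_motzkin n \<longleftrightarrow> P \<in> labelled_motzkin {1..n}"
    by (simp add: P)
qed

lemma wl_motzkin_first_eq: "wl_motzkin_first c n = {(p, \<sigma>) \<in> labelled_motzkin {1..n}. p ! 0 = c}"
  by (simp add: wl_motzkin_first_def wl_motzkin_eq_labelled_motzkin)

lemma labelled_motzkin_nonempty: "(p, \<sigma>) \<in> labelled_motzkin S \<Longrightarrow> p \<noteq> [] \<and> \<sigma> \<noteq> []"
  by (auto simp: labelled_motzkin_def motzkin_word_not_Nil)

lemma labelled_motzkin_relabel:
  assumes "bij_betw h S T" "strict_mono_on S h" "P \<in> labelled_motzkin S"
  shows "apsnd (map h) P \<in> labelled_motzkin T"
proof -
  obtain p \<sigma> where P: "P = (p, \<sigma>)"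
    by fastforce
  with assms have "distinct (map h \<sigma>)" "set (map h \<sigma>) = T" "well_labelled p (map h \<sigma>)"
    by (auto simp: labelled_motzkin_def bij_betw_def distinct_map intro: inj_on_subset well_labelled_map)
  with assms(3) show ?thesis
    by (simp add: P labelled_motzkin_def)
qed

lemma bij_betw_relabel:
  assumes h: "bij_betw h S T" "strict_mono_on S h"
  shows "bij_betw (apsnd (map h)) (labelled_motzkin S) (labelled_motzkin T)"
proof (rule bij_betw_byWitness[where f' = "apsnd (map (the_inv_into S h))"])
  have h': "bij_betw (the_inv_into S h) T S" "strict_mono_on T (the_inv_into S h)"
    using h by (simp_all add: bij_betw_the_inv_into strict_mono_on_the_inv_into)
  show "apsnd (map h) ` labelled_motzkin S \<subseteq> labelled_motzkin T"
    using labelled_motzkin_relabel[OF h] by blast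
  show "apsnd (map (the_inv_into S h)) ` labelled_motzkin T \<subseteq> labelled_motzkin S"
    using labelled_motzkin_relabel[OF h'] by blast
  show "\<forall>P \<in> labelled_motzkin S. apsnd (map (the_inv_into S h)) (apsnd (map h) P) = P"
    using h(1) by (auto simp: labelled_motzkin_def bij_betw_def the_inv_into_f_f intro!: map_idI)
  show "\<forall>P \<in> labelled_motzkin T. apsnd (map h) (apsnd (map (the_inv_into S h)) P) = P"
    using h(1) by (auto simp: labelled_motzkin_def bij_betw_def f_the_inv_into_f intro!: map_idI)
qed

lemma bij_betw_standardize:
  "finite S \<Longrightarrow> bij_betw (apsnd (map (rank S))) (labelled_motzkin S) (labelled_motzkin {1..card S})"
  by (rule bij_betw_relabel[OF bij_betw_rank strict_mono_on_rank])

section \<open>Paths starting with a flat step\<close>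

lemma Cons_zero_in_labelled_motzkin_iff:
  "(0 # p, x # \<sigma>) \<in> labelled_motzkin S \<longleftrightarrow> x \<in> S \<and> (p, \<sigma>) \<in> labelled_motzkin (S - {x})"
  by (auto simp: labelled_motzkin_def)

lemma bij_betw_strip_flat_step:
  "bij_betw (\<lambda>(p, \<sigma>). (hd \<sigma>, (tl p, tl \<sigma>))) {(p, \<sigma>) \<in> labelled_motzkin S. p ! 0 = 0}
     (SIGMA x:S. labelled_motzkin (S - {x}))"
proof (rule bij_betw_byWitness[where f' = "\<lambda>(x, p, \<sigma>). (0 # p, x # \<sigma>)"])
  have flat_start: "\<exists>q x \<tau>. P = (0 # q, x # \<tau>)" if "P \<in> labelled_motzkin S" "fst P ! 0 = 0" for P
    using that labelled_motzkin_nonempty[of "fst P" "snd P" S]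
    by (cases P) (metis list.exhaust nth_Cons_0 fst_conv snd_conv)
  show "\<forall>P \<in> {(p, \<sigma>) \<in> labelled_motzkin S. p ! 0 = 0}.
      (\<lambda>(x, p, \<sigma>). (0 # p, x # \<sigma>)) ((\<lambda>(p, \<sigma>). (hd \<sigma>, tl p, tl \<sigma>)) P) = P"
    using flat_start by fastforce
  show "(\<lambda>(p, \<sigma>). (hd \<sigma>, tl p, tl \<sigma>)) ` {(p, \<sigma>) \<in> labelled_motzkin S. p ! 0 = 0}
      \<subseteq> (SIGMA x:S. labelled_motzkin (S - {x}))"
    using flat_start by (fastforce simp: Cons_zero_in_labelled_motzkin_iff)
qed (auto simp: Cons_zero_in_labelled_motzkin_iff)

lemma bij_betw_flat_start:
  assumes "finite S"
  shows "\<exists>f. bij_betw f {(p, \<sigma>) \<in> labelled_motzkin S. p ! 0 = 0} (S \<times> labelled_motzkin {1..card S - 1})"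
proof -
  have "bij_betw (apsnd (map (rank (S - {x})))) (labelled_motzkin (S - {x}))
      (labelled_motzkin {1..card S - 1})" if "x \<in> S" for x
    using bij_betw_standardize[of "S - {x}"] assms that by simp
  then have "bij_betw (\<lambda>(x, P). (x, apsnd (map (rank (S - {x}))) P))
      (SIGMA x:S. labelled_motzkin (S - {x})) (S \<times> labelled_motzkin {1..card S - 1})"
    by (rule bij_betw_Sigma_fibrewise)
  with bij_betw_strip_flat_step show ?thesis
    by (blast intro: bij_betw_trans)
qed

section \<open>Paths starting with an up step\<close>

lemma arch_in_labelled_motzkin_iff:
  assumes a: "motzkin_word a" and \<tau>: "length \<tau> = Suc (length a)"
  shows "(reverse_walk a @ (-1) # b, rev \<tau> @ \<rho>) \<in> labelled_motzkin S \<longleftrightarrow>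
    set \<tau> \<subseteq> S \<and> (a, \<tau>) \<in> labelled_motzkin (set \<tau>) \<and> (b, \<rho>) \<in> labelled_motzkin (S - set \<tau>) \<and>
    hd \<tau> < hd \<rho>"
proof (cases \<rho>)
  case Nil
  with \<tau> show ?thesis
    by (auto simp: labelled_motzkin_def)
next
  case (Cons y \<rho>')
  have "\<tau> \<noteq> []"
    using \<tau> by auto
  then have labels: "well_labelled (reverse_walk a @ (-1) # b) (rev \<tau> @ \<rho>) \<longleftrightarrow>
      well_labelled a \<tau> \<and> hd \<tau> < hd \<rho> \<and> well_labelled b \<rho>"
    using well_labelled_append[of "rev \<tau>" "reverse_walk a" "-1" b y \<rho>'] well_labelled_reverse_walk_iff[OF \<tau>] \<tau>
    by (simp add: Cons last_rev)
  have steps: "set (reverse_walk a @ (-1) # b) \<subseteq> {-1, 0, 1} \<longleftrightarrow> set a \<subseteq> {-1, 0, 1} \<and> set b \<subseteq> {-1, 0, 1}"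
    by (auto simp: set_reverse_walk)
  have length: "length (rev \<tau> @ \<rho>) = Suc (length (reverse_walk a @ (-1) # b)) \<longleftrightarrow>
      length \<rho> = Suc (length b)"
    using \<tau> by simp
  have partition: "distinct (rev \<tau> @ \<rho>) \<and> set (rev \<tau> @ \<rho>) = S \<longleftrightarrow>
      set \<tau> \<subseteq> S \<and> distinct \<tau> \<and> distinct \<rho> \<and> set \<rho> = S - set \<tau>"
    by auto
  show ?thesis
    unfolding labelled_motzkin_def mem_Collect_eq case_prod_conv
    unfolding labels steps length motzkin_word_arch_iff[OF a]
    using a \<tau> partition by blast
qed

lemma labelled_motzkin_up_startE:
  assumes "(p, \<sigma>) \<in> labelled_motzkin S" "p ! 0 = 1"
  obtains a \<tau> b \<rho> where "p = reverse_walk a @ (-1) # b" "\<sigma> = rev \<tau> @ \<rho>"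
    "motzkin_word a" "length \<tau> = Suc (length a)"
proof -
  from assms have "motzkin_word p" "set p \<subseteq> {-1, 0, 1}"
    by (simp_all add: labelled_motzkin_def)
  with assms(2) obtain a b where p: "p = reverse_walk a @ (-1) # b" "motzkin_word a"
    using motzkin_word_arch_decomposition by blast
  with assms(1) have "Suc (length a) \<le> length \<sigma>"
    by (simp add: labelled_motzkin_def)
  with p show ?thesis
    by (intro that[of a b "rev (take (Suc (length a)) \<sigma>)" "drop (Suc (length a)) \<sigma>"]) auto
qed

type_synonym labelled_entry = "nat set \<times> (int list \<times> nat list)"

definition labelled_splits :: "nat set \<Rightarrow> (labelled_entry \<times> labelled_entry) set" where
  "labelled_splits S = {((I, P), (S - I, Q)) | I P Q.
     I \<subseteq> S \<and> P \<in> labelled_motzkin I \<and> Q \<in> labelled_motzkin (S - I)}"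

lemma labelled_splitsE:
  assumes "(x, y) \<in> labelled_splits S"
  obtains a \<tau> b \<rho> where "x = (set \<tau>, (a, \<tau>))" "y = (S - set \<tau>, (b, \<rho>))" "set \<tau> \<subseteq> S"
    "(a, \<tau>) \<in> labelled_motzkin (set \<tau>)" "(b, \<rho>) \<in> labelled_motzkin (S - set \<tau>)"
proof -
  from assms obtain I P Q where xy: "x = (I, P)" "y = (S - I, Q)" "I \<subseteq> S"
    "P \<in> labelled_motzkin I" "Q \<in> labelled_motzkin (S - I)"
    unfolding labelled_splits_def by blast
  moreover obtain a \<tau> b \<rho> where "P = (a, \<tau>)" "Q = (b, \<rho>)"
    by fastforce
  moreover from calculation have "I = set \<tau>"
    by (simp add: labelled_motzkin_def)
  ultimately show ?thesis
    using that by simp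
qed

lemma labelled_splits_swap: "(x, y) \<in> labelled_splits S \<Longrightarrow> (y, x) \<in> labelled_splits S"
  unfolding labelled_splits_def by (auto simp: double_diff)

definition first_label :: "labelled_entry \<Rightarrow> nat" where
  "first_label e = hd (snd (snd e))"

lemma first_label_mem: "P \<in> labelled_motzkin I \<Longrightarrow> first_label (I, P) \<in> I"
proof (cases P)
  case (Pair p \<sigma>)
  assume "P \<in> labelled_motzkin I"
  with Pair have "(p, \<sigma>) \<in> labelled_motzkin I"
    by simp
  then have "hd \<sigma> \<in> set \<sigma>" "set \<sigma> = I"
    by (simp_all add: labelled_motzkin_nonempty hd_in_set) (simp add: labelled_motzkin_def)
  with Pair show ?thesis
    by (simp add: first_label_def)
qed

lemma labelled_splits_first_labels_differ:
  assumes "(x, y) \<in> labelled_splits S"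
  shows "first_label x \<noteq> first_label y"
proof -
  from assms obtain I P Q where "x = (I, P)" "y = (S - I, Q)"
    "P \<in> labelled_motzkin I" "Q \<in> labelled_motzkin (S - I)"
    unfolding labelled_splits_def by blast
  with first_label_mem[of P I] first_label_mem[of Q "S - I"] show ?thesis
    by auto
qed

text \<open>The prefix piece is stored backwards (negated reversed steps, reversed labels), which makes
  it a Motzkin path again; its first label is the label just before the returning down step.\<close>

definition split_at_first_return :: "int list \<times> nat list \<Rightarrow> labelled_entry \<times> labelled_entry" where
  "split_at_first_return = (\<lambda>(p, \<sigma>). let k = first_return p in
     ((set (take k \<sigma>), (reverse_walk (take (k - 1) p), rev (take k \<sigma>))),
      (set (drop k \<sigma>), (drop k p, drop k \<sigma>))))"

lemma split_at_first_return_arch: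
  assumes "motzkin_word a" "length \<tau> = Suc (length a)"
  shows "split_at_first_return (reverse_walk a @ (-1) # b, rev \<tau> @ \<rho>) = ((set \<tau>, (a, \<tau>)), (set \<rho>, (b, \<rho>)))"
  using assms by (simp add: split_at_first_return_def first_return_arch)

definition join_at_return :: "labelled_entry \<times> labelled_entry \<Rightarrow> int list \<times> nat list" where
  "join_at_return = (\<lambda>((I, a, \<tau>), (J, b, \<rho>)). (reverse_walk a @ (-1) # b, rev \<tau> @ \<rho>))"

lemma join_split_at_first_return:
  assumes "P \<in> {(p, \<sigma>) \<in> labelled_motzkin S. p ! 0 = 1}"
  shows "join_at_return (split_at_first_return P) = P"
proof -
  obtain p \<sigma> where P: "P = (p, \<sigma>)" "(p, \<sigma>) \<in> labelled_motzkin S" "p ! 0 = 1"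
    using assms by blast
  obtain a \<tau> b \<rho> where "p = reverse_walk a @ (-1) # b" "\<sigma> = rev \<tau> @ \<rho>"
    "motzkin_word a" "length \<tau> = Suc (length a)"
    by (rule labelled_motzkin_up_startE[OF P(2,3)])
  with P(1) show ?thesis
    by (simp add: split_at_first_return_arch join_at_return_def)
qed

lemma split_at_first_return_in_labelled_splits:
  assumes "P \<in> {(p, \<sigma>) \<in> labelled_motzkin S. p ! 0 = 1}"
  shows "split_at_first_return P \<in> {(x, y) \<in> labelled_splits S. first_label x < first_label y}"
proof -
  obtain p \<sigma> where P: "P = (p, \<sigma>)" "(p, \<sigma>) \<in> labelled_motzkin S" "p ! 0 = 1"
    using assms by blast
  obtain a \<tau> b \<rho> where arch: "p = reverse_walk a @ (-1) # b" "\<sigma> = rev \<tau> @ \<rho>"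
    "motzkin_word a" "length \<tau> = Suc (length a)"
    by (rule labelled_motzkin_up_startE[OF P(2,3)])
  with P(2) have parts: "set \<tau> \<subseteq> S" "(a, \<tau>) \<in> labelled_motzkin (set \<tau>)"
    "(b, \<rho>) \<in> labelled_motzkin (S - set \<tau>)" "hd \<tau> < hd \<rho>"
    by (simp_all add: arch_in_labelled_motzkin_iff)
  then have "set \<rho> = S - set \<tau>"
    by (simp add: labelled_motzkin_def)
  with parts have "((set \<tau>, (a, \<tau>)), (set \<rho>, (b, \<rho>))) \<in> labelled_splits S"
    unfolding labelled_splits_def by blast
  with parts(4) P(1) arch show ?thesis
    by (simp add: split_at_first_return_arch first_label_def)
qed

lemma split_join_at_return:
  assumes "e \<in> {(x, y) \<in> labelled_splits S. first_label x < first_label y}"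
  shows "split_at_first_return (join_at_return e) = e"
proof -
  obtain x y where "e = (x, y)" "(x, y) \<in> labelled_splits S"
    using assms by blast
  moreover from this(2) obtain a \<tau> b \<rho> where "x = (set \<tau>, (a, \<tau>))" "y = (S - set \<tau>, (b, \<rho>))"
    "(a, \<tau>) \<in> labelled_motzkin (set \<tau>)" "(b, \<rho>) \<in> labelled_motzkin (S - set \<tau>)"
    by (rule labelled_splitsE)
  ultimately show ?thesis
    by (simp add: join_at_return_def split_at_first_return_arch labelled_motzkin_def)
qed

lemma join_at_return_in_labelled_motzkin:
  assumes "e \<in> {(x, y) \<in> labelled_splits S. first_label x < first_label y}"
  shows "join_at_return e \<in> {(p, \<sigma>) \<in> labelled_motzkin S. p ! 0 = 1}"
proof -
  obtain x y where e: "e = (x, y)" "(x, y) \<in> labelled_splits S" "first_label x < first_label y"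
    using assms by blast
  obtain a \<tau> b \<rho> where xy: "x = (set \<tau>, (a, \<tau>))" "y = (S - set \<tau>, (b, \<rho>))" "set \<tau> \<subseteq> S"
    "(a, \<tau>) \<in> labelled_motzkin (set \<tau>)" "(b, \<rho>) \<in> labelled_motzkin (S - set \<tau>)"
    using e(2) by (rule labelled_splitsE)
  moreover from e(3) xy have "hd \<tau> < hd \<rho>"
    by (simp add: first_label_def)
  moreover have a: "motzkin_word a" "length \<tau> = Suc (length a)" "set a \<subseteq> {-1, 0, 1}"
    using xy(4) by (simp_all add: labelled_motzkin_def)
  ultimately have "(reverse_walk a @ (-1) # b, rev \<tau> @ \<rho>) \<in> labelled_motzkin S"
    by (simp add: arch_in_labelled_motzkin_iff)
  with a show ?thesis
    by (simp add: e xy join_at_return_def nth_zero_reverse_walk)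
qed

lemma bij_betw_split_at_first_return:
  "bij_betw split_at_first_return {(p, \<sigma>) \<in> labelled_motzkin S. p ! 0 = 1}
     {(x, y) \<in> labelled_splits S. first_label x < first_label y}"
proof (rule bij_betw_byWitness[where f' = join_at_return])
  show "split_at_first_return ` {(p, \<sigma>) \<in> labelled_motzkin S. p ! 0 = 1}
      \<subseteq> {(x, y) \<in> labelled_splits S. first_label x < first_label y}"
    by (rule image_subsetI) (rule split_at_first_return_in_labelled_splits)
  show "join_at_return ` {(x, y) \<in> labelled_splits S. first_label x < first_label y}
      \<subseteq> {(p, \<sigma>) \<in> labelled_motzkin S. p ! 0 = 1}"
    by (rule image_subsetI) (rule join_at_return_in_labelled_motzkin)
qed (simp_all add: join_split_at_first_return split_join_at_return)

definition standardize :: "labelled_entry \<Rightarrow> labelled_entry" where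
  "standardize = (\<lambda>(I, P). (I, apsnd (map (rank I)) P))"

lemma inj_on_standardize: "inj_on standardize {(I, P). finite I \<and> P \<in> labelled_motzkin I}"
proof (rule inj_onI, clarify)
  fix I P J Q
  assume "finite I" "P \<in> labelled_motzkin I" "Q \<in> labelled_motzkin J"
    and "standardize (I, P) = standardize (J, Q)"
  then have "I = J" and "apsnd (map (rank I)) P = apsnd (map (rank I)) Q"
    unfolding standardize_def by auto
  moreover have "inj_on (apsnd (map (rank I))) (labelled_motzkin I)"
    using bij_betw_standardize[OF \<open>finite I\<close>] by (rule bij_betw_imp_inj_on)
  ultimately show "I = J \<and> P = Q"
    using \<open>P \<in> labelled_motzkin I\<close> \<open>Q \<in> labelled_motzkin J\<close> by (simp add: inj_onD)
qed

lemma bij_betw_up_start: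
  assumes "finite S"
  shows "\<exists>g. bij_betw g {(p, \<sigma>) \<in> labelled_motzkin S. p ! 0 = 1}
    ((`) standardize ` {{x, y} | x y. (x, y) \<in> labelled_splits S})"
proof -
  let ?pairs = "{{x, y} | x y. (x, y) \<in> labelled_splits S}"
  have "\<Union> ?pairs \<subseteq> {(I, P). finite I \<and> P \<in> labelled_motzkin I}"
    using assms by (auto simp: labelled_splits_def intro: finite_subset)
  then have "bij_betw ((`) standardize) ?pairs ((`) standardize ` ?pairs)"
    by (intro inj_on_imp_bij_betw inj_on_image inj_on_subset[OF inj_on_standardize])
  moreover have "bij_betw (\<lambda>(x, y). {x, y}) {(x, y) \<in> labelled_splits S. first_label x < first_label y} ?pairs"
    by (rule bij_betw_unordered_pairs[OF labelled_splits_swap labelled_splits_first_labels_differ])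
  ultimately have "bij_betw ((`) standardize \<circ> (\<lambda>(x, y). {x, y}) \<circ> split_at_first_return)
      {(p, \<sigma>) \<in> labelled_motzkin S. p ! 0 = 1} ((`) standardize ` ?pairs)"
    using bij_betw_split_at_first_return by (intro bij_betw_trans)
  then show ?thesis
    by blast
qed

lemma pair_set_eq_standardized_splits:
  "pair_set n = (`) standardize ` {{x, y} | x y. (x, y) \<in> labelled_splits {1..n}}"
proof -
  have wl_motzkin_card: "wl_motzkin (card I) = apsnd (map (rank I)) ` labelled_motzkin I" if "I \<subseteq> {1..n}" for I
    using bij_betw_standardize[of I] finite_subset[OF that]
    by (simp add: bij_betw_def wl_motzkin_eq_labelled_motzkin)
  have standardize_pair: "standardize ` {(I, P), ({1..n} - I, Q)} =
      {(I, apsnd (map (rank I)) P), ({1..n} - I, apsnd (map (rank ({1..n} - I))) Q)}" for I P Q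
    by (simp add: standardize_def)
  show ?thesis
  proof (intro equalityI subsetI)
    fix X assume "X \<in> pair_set n"
    then obtain I P Q where X: "X = {(I, P), ({1..n} - I, Q)}" "I \<subseteq> {1..n}"
      "P \<in> wl_motzkin (card I)" "Q \<in> wl_motzkin (card ({1..n} - I))"
      unfolding pair_set_def by blast
    obtain P' where P': "P = apsnd (map (rank I)) P'" "P' \<in> labelled_motzkin I"
      using X(3) wl_motzkin_card[OF X(2)] by blast
    obtain Q' where Q': "Q = apsnd (map (rank ({1..n} - I))) Q'" "Q' \<in> labelled_motzkin ({1..n} - I)"
      using X(4) wl_motzkin_card[of "{1..n} - I"] by blast
    have "X = standardize ` {(I, P'), ({1..n} - I, Q')}"
      by (simp add: X(1) P'(1) Q'(1) standardize_def)
    moreover have "((I, P'), ({1..n} - I, Q')) \<in> labelled_splits {1..n}"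
      unfolding labelled_splits_def using X(2) P'(2) Q'(2) by blast
    ultimately show "X \<in> (`) standardize ` {{x, y} | x y. (x, y) \<in> labelled_splits {1..n}}"
      by blast
  next
    fix X assume "X \<in> (`) standardize ` {{x, y} | x y. (x, y) \<in> labelled_splits {1..n}}"
    then obtain I P Q where "X = standardize ` {(I, P), ({1..n} - I, Q)}" "I \<subseteq> {1..n}"
      "P \<in> labelled_motzkin I" "Q \<in> labelled_motzkin ({1..n} - I)"
      unfolding labelled_splits_def by blast
    then show "X \<in> pair_set n"
      unfolding pair_set_def standardize_pair using wl_motzkin_card[of I] wl_motzkin_card[of "{1..n} - I"]
      by blast
  qed
qed

theorem proposition1:
  fixes n :: nat
  assumes "n \<ge> 1"
  shows "(\<exists>f. bij_betw f (wl_motzkin_first 0 n) ({1..n} \<times> wl_motzkin (n - 1)))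
       \<and> (\<exists>g. bij_betw g (wl_motzkin_first 1 n) (pair_set n))"
  using bij_betw_flat_start[of "{1..n}"] bij_betw_up_start[of "{1..n}"]
  by (simp add: wl_motzkin_first_eq wl_motzkin_eq_labelled_motzkin pair_set_eq_standardized_splits)

end
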